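(* Any (randomized) voting rule taking top-$t$ preference profiles as input with constant metric distortion has utilitarian distortion $\Omega\!\left(\max\!\left(\frac{m\sqrt m}{t\sqrt t},\sqrt m\right)\right)$.
   Context: Setting: $n$ agents, $m$ alternatives; each agent has an underlying strict ranking, but the rule only receives each agent's ordered list of her top $t$ alternatives (a top-$t$ profile $\vec\sigma_t$) and outputs a distribution over alternatives. A metric (pseudometric on agents and alternatives) or a unit-sum utility profile is consistent with $\vec\sigma_t$ if it is consistent with some full ranking profile extending $\vec\sigma_t$, where $d$ is consistent with full $\vec\sigma$ if $X\succ_iY\Rightarrow d(i,X)\le d(i,Y)$ and $\vec u$ if $X\succ_iY\Rightarrow u_i(X)\ge u_i(Y)$. $\mathrm{SC}(X,d)=\sum_id(i,X)$, $\mathrm{SW}(X,\vec u)=\sum_iu_i(X)$ with $u_i\ge0$, $\sum_Xu_i(X)=1$. Metric distortion: worst case over top-$t$ profiles and consistent $d$ of $\mathbb E[\mathrm{SC}(\text{output},d)]/\min_X\mathrm{SC}(X,d)$; utilitarian distortion: worst case over top-$t$ profiles and consistent $\vec u$ of $\max_X\mathrm{SW}(X,\vec u)/\mathbb E[\mathrm{SW}(\text{output},\vec u)]$. *)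

theory Defs
  imports Complex_Main "HOL-Library.Extended_Real"
begin

text \<open>Alternatives are 0..<m, agents are 0..<n. A top-t profile is a list (one entry per
agent, n = length) of lists of length t of distinct alternatives, the i-th list being agent i's
ordered top-t list. A full ranking is a list enumerating all alternatives, best first.\<close>

definition top_profile :: "nat \<Rightarrow> nat \<Rightarrow> nat list list \<Rightarrow> bool" where
  "top_profile m t \<sigma> \<longleftrightarrow> \<sigma> \<noteq> [] \<and>
     (\<forall>s\<in>set \<sigma>. length s = t \<and> distinct s \<and> set s \<subseteq> {..<m})"

definition full_extension :: "nat \<Rightarrow> nat list list \<Rightarrow> nat list list \<Rightarrow> bool" where
  "full_extension m \<sigma> \<tau> \<longleftrightarrow> length \<tau> = length \<sigma> \<and>
     (\<forall>i<length \<sigma>. distinct (\<tau>!i) \<and> set (\<tau>!i) = {..<m} \<and>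
        take (length (\<sigma>!i)) (\<tau>!i) = \<sigma>!i)"

definition prefers :: "nat list \<Rightarrow> nat \<Rightarrow> nat \<Rightarrow> bool" where
  "prefers r X Y \<longleftrightarrow> (\<exists>a b. a < b \<and> b < length r \<and> r!a = X \<and> r!b = Y)"

text \<open>Points: Inl i = agent i, Inr X = alternative X.\<close>
definition pseudometric_on :: "(nat + nat) set \<Rightarrow> ((nat + nat) \<Rightarrow> (nat + nat) \<Rightarrow> real) \<Rightarrow> bool" where
  "pseudometric_on P d \<longleftrightarrow>
     (\<forall>x\<in>P. d x x = 0) \<and> (\<forall>x\<in>P. \<forall>y\<in>P. d x y \<ge> 0 \<and> d x y = d y x) \<and>
     (\<forall>x\<in>P. \<forall>y\<in>P. \<forall>z\<in>P. d x z \<le> d x y + d y z)"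

definition metric_consistent :: "nat \<Rightarrow> nat list list \<Rightarrow> ((nat + nat) \<Rightarrow> (nat + nat) \<Rightarrow> real) \<Rightarrow> bool" where
  "metric_consistent m \<sigma> d \<longleftrightarrow>
     pseudometric_on (Inl ` {..<length \<sigma>} \<union> Inr ` {..<m}) d \<and>
     (\<exists>\<tau>. full_extension m \<sigma> \<tau> \<and>
        (\<forall>i<length \<sigma>. \<forall>X Y. prefers (\<tau>!i) X Y \<longrightarrow> d (Inl i) (Inr X) \<le> d (Inl i) (Inr Y)))"

definition utility_consistent :: "nat \<Rightarrow> nat list list \<Rightarrow> (nat \<Rightarrow> nat \<Rightarrow> real) \<Rightarrow> bool" where
  "utility_consistent m \<sigma> u \<longleftrightarrow>
     (\<forall>i<length \<sigma>. (\<forall>X<m. u i X \<ge> 0) \<and> (\<Sum>X<m. u i X) = 1) \<and>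
     (\<exists>\<tau>. full_extension m \<sigma> \<tau> \<and>
        (\<forall>i<length \<sigma>. \<forall>X Y. prefers (\<tau>!i) X Y \<longrightarrow> u i X \<ge> u i Y))"

definition SC :: "nat list list \<Rightarrow> ((nat + nat) \<Rightarrow> (nat + nat) \<Rightarrow> real) \<Rightarrow> nat \<Rightarrow> real" where
  "SC \<sigma> d X = (\<Sum>i<length \<sigma>. d (Inl i) (Inr X))"

definition SW :: "nat list list \<Rightarrow> (nat \<Rightarrow> nat \<Rightarrow> real) \<Rightarrow> nat \<Rightarrow> real" where
  "SW \<sigma> u X = (\<Sum>i<length \<sigma>. u i X)"

definition is_rule :: "nat \<Rightarrow> nat \<Rightarrow> (nat list list \<Rightarrow> nat \<Rightarrow> real) \<Rightarrow> bool" where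
  "is_rule m t f \<longleftrightarrow> (\<forall>\<sigma>. top_profile m t \<sigma> \<longrightarrow>
     (\<forall>X<m. f \<sigma> X \<ge> 0) \<and> (\<Sum>X<m. f \<sigma> X) = 1)"

text \<open>Ratio on one instance; conventions: 0/0 = 1, positive/0 = infinity.\<close>
definition metric_ratio :: "nat \<Rightarrow> (nat list list \<Rightarrow> nat \<Rightarrow> real) \<Rightarrow> nat list list \<Rightarrow>
    ((nat + nat) \<Rightarrow> (nat + nat) \<Rightarrow> real) \<Rightarrow> ereal" where
  "metric_ratio m f \<sigma> d =
     (let E = (\<Sum>X<m. f \<sigma> X * SC \<sigma> d X); opt = (MIN X\<in>{..<m}. SC \<sigma> d X) in
      if opt > 0 then ereal (E / opt) else if E = 0 then 1 else \<infinity>)"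

definition metric_distortion :: "nat \<Rightarrow> nat \<Rightarrow> (nat list list \<Rightarrow> nat \<Rightarrow> real) \<Rightarrow> ereal" where
  "metric_distortion m t f =
     (SUP p\<in>{(\<sigma>, d). top_profile m t \<sigma> \<and> metric_consistent m \<sigma> d}. metric_ratio m f (fst p) (snd p))"

definition util_ratio :: "nat \<Rightarrow> (nat list list \<Rightarrow> nat \<Rightarrow> real) \<Rightarrow> nat list list \<Rightarrow>
    (nat \<Rightarrow> nat \<Rightarrow> real) \<Rightarrow> ereal" where
  "util_ratio m f \<sigma> u =
     (let E = (\<Sum>X<m. f \<sigma> X * SW \<sigma> u X); opt = (MAX X\<in>{..<m}. SW \<sigma> u X) in
      if E > 0 then ereal (opt / E) else \<infinity>)"

definition util_distortion :: "nat \<Rightarrow> nat \<Rightarrow> (nat list list \<Rightarrow> nat \<Rightarrow> real) \<Rightarrow> ereal" where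
  "util_distortion m t f =
     (SUP p\<in>{(\<sigma>, u). top_profile m t \<sigma> \<and> utility_consistent m \<sigma> u}. util_ratio m f (fst p) (snd p))"

end

(*
  Two families of instances give the two terms.

  Order sqrt m: about sqrt m agents each rank a different alternative first, and the rule gives one
  of these alternatives, Y, probability at most 1/sqrt m. If agent Y cares only about Y and all other
  agents are indifferent, the optimum has welfare at least 1 while the rule collects O(1/sqrt m).

  Order (m/t)^(3/2): q ~ m/(3t) minority agents report disjoint blocks of t alternatives, and
  G ~ sqrt (m/t) majority agents per block report q further blocks. Line metrics separating the
  reported blocks from the rest, or the minority from the majority, show that a rule of metric
  distortion at most C stays on the reported blocks and gives the minority blocks total probability
  at most C/G. Each minority agent spreads its utility over its block and a common unreported
  alternative, which thus has welfare q/(t+1); each majority agent spreads it over its block and all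
  unreported alternatives, so a majority alternative has welfare at most G/(m/3). The rule collects
  O((C + 1)/(G t)), a factor of order (m/t)^(3/2)/(C + 1) below the optimum.
*)

theory Submission
  imports Defs
begin

lemma prefers_append:
  assumes "prefers (xs @ ys) X Y"
  shows "X \<in> set xs \<or> Y \<in> set ys"
proof -
  obtain a b where ab: "a < b" "b < length (xs @ ys)" "(xs @ ys) ! a = X" "(xs @ ys) ! b = Y"
    using assms unfolding prefers_def by blast
  show ?thesis
  proof (cases "b < length xs")
    case True
    then show ?thesis using ab by (auto simp: nth_append)
  next
    case False
    then show ?thesis using ab by (auto simp: nth_append)
  qed
qed

lemma prefers_mem: "prefers r X Y \<Longrightarrow> X \<in> set r \<and> Y \<in> set r"
  unfolding prefers_def by auto

definition extend_ranking :: "nat \<Rightarrow> nat list \<Rightarrow> nat set \<Rightarrow> nat list" where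
  "extend_ranking m s T =
     (s @ filter (\<lambda>X. X \<in> T \<and> X \<notin> set s) [0..<m]) @ filter (\<lambda>X. X \<notin> T \<and> X \<notin> set s) [0..<m]"

lemma extend_ranking_respects:
  assumes "set s \<subseteq> T" "prefers (extend_ranking m s T) X Y" "Y \<in> T"
  shows "X \<in> T"
  using prefers_append[OF assms(2)[unfolded extend_ranking_def]] assms(1,3) by auto

lemma top_profile_nth:
  "top_profile m t \<sigma> \<Longrightarrow> i < length \<sigma> \<Longrightarrow> length (\<sigma>!i) = t \<and> distinct (\<sigma>!i) \<and> set (\<sigma>!i) \<subseteq> {..<m}"
  unfolding top_profile_def using nth_mem by blast

lemma top_profile_extension_respecting:
  assumes tp: "top_profile m t \<sigma>" and sub: "\<And>i. i < length \<sigma> \<Longrightarrow> set (\<sigma>!i) \<subseteq> T i"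
  obtains \<tau> where "full_extension m \<sigma> \<tau>"
    "\<And>i X Y. i < length \<sigma> \<Longrightarrow> prefers (\<tau>!i) X Y \<Longrightarrow> Y \<in> T i \<Longrightarrow> X \<in> T i"
proof
  define \<tau> where "\<tau> = map (\<lambda>i. extend_ranking m (\<sigma>!i) (T i)) [0..<length \<sigma>]"
  show "full_extension m \<sigma> \<tau>"
    using top_profile_nth[OF tp]
    by (auto simp: full_extension_def \<tau>_def extend_ranking_def distinct_filter)
  show "X \<in> T i" if "i < length \<sigma>" "prefers (\<tau>!i) X Y" "Y \<in> T i" for i X Y
    using extend_ranking_respects[OF sub] that by (simp add: \<tau>_def)
qed

definition uniform_on :: "nat set \<Rightarrow> nat \<Rightarrow> real" where
  "uniform_on T X = (if X \<in> T then 1 / real (card T) else 0)"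

lemma sum_uniform_on:
  assumes "T \<subseteq> {..<m}" "T \<noteq> {}"
  shows "(\<Sum>X<m. uniform_on T X) = 1"
proof -
  have "finite T" using assms(1) finite_subset by blast
  moreover have "(\<Sum>X<m. uniform_on T X) = (\<Sum>X\<in>T. 1 / real (card T))"
    unfolding uniform_on_def using assms(1) by (simp add: sum.If_cases Int_absorb1)
  ultimately show ?thesis using assms(2) by simp
qed

lemma utility_consistent_uniform_on:
  assumes fe: "full_extension m \<sigma> \<tau>"
    and T: "\<And>i. i < length \<sigma> \<Longrightarrow> T i \<subseteq> {..<m} \<and> T i \<noteq> {}"
    and respects: "\<And>i X Y. i < length \<sigma> \<Longrightarrow> prefers (\<tau>!i) X Y \<Longrightarrow> Y \<in> T i \<Longrightarrow> X \<in> T i"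
  shows "utility_consistent m \<sigma> (\<lambda>i. uniform_on (T i))"
proof -
  have "(\<forall>X<m. 0 \<le> uniform_on (T i) X) \<and> (\<Sum>X<m. uniform_on (T i) X) = 1"
    if "i < length \<sigma>" for i
    using T[OF that] sum_uniform_on[of "T i" m] by (simp add: uniform_on_def)
  moreover have "uniform_on (T i) Y \<le> uniform_on (T i) X"
    if "i < length \<sigma>" "prefers (\<tau>!i) X Y" for i X Y
    using respects[OF that] by (simp add: uniform_on_def)
  ultimately show ?thesis unfolding utility_consistent_def using fe by blast
qed

section \<open>Two-point line metrics\<close>

definition cluster_side :: "nat set \<Rightarrow> nat set \<Rightarrow> nat + nat \<Rightarrow> real" where
  "cluster_side A S = case_sum (\<lambda>i. if i \<in> A then 1 else 0) (\<lambda>X. if X \<in> S then 0 else 1)"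

definition cluster_metric :: "nat set \<Rightarrow> nat set \<Rightarrow> nat + nat \<Rightarrow> nat + nat \<Rightarrow> real" where
  "cluster_metric A S p q = \<bar>cluster_side A S p - cluster_side A S q\<bar>"

lemma cluster_metric_agent_alternative:
  "cluster_metric A S (Inl i) (Inr X) = (if (i \<in> A) = (X \<in> S) then 1 else 0)"
  by (simp add: cluster_metric_def cluster_side_def)

lemma metric_consistent_cluster_metric:
  assumes tp: "top_profile m t \<sigma>"
    and in_S: "\<And>i. i < length \<sigma> \<Longrightarrow> i \<notin> A \<Longrightarrow> set (\<sigma>!i) \<subseteq> S"
    and out_S: "\<And>i. i < length \<sigma> \<Longrightarrow> i \<in> A \<Longrightarrow> set (\<sigma>!i) \<subseteq> - S"
  shows "metric_consistent m \<sigma> (cluster_metric A S)"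
proof -
  define T where "T i = (if i \<in> A then - S else S)" for i
  have "set (\<sigma>!i) \<subseteq> T i" if "i < length \<sigma>" for i
    using in_S[OF that] out_S[OF that] unfolding T_def by (cases "i \<in> A") simp_all
  then obtain \<tau> where fe: "full_extension m \<sigma> \<tau>"
    and respects: "\<And>i X Y. i < length \<sigma> \<Longrightarrow> prefers (\<tau>!i) X Y \<Longrightarrow> Y \<in> T i \<Longrightarrow> X \<in> T i"
    using top_profile_extension_respecting[OF tp] by blast
  have "cluster_metric A S (Inl i) (Inr X) \<le> cluster_metric A S (Inl i) (Inr Y)"
    if "i < length \<sigma>" "prefers (\<tau>!i) X Y" for i X Y
    using respects[OF that] unfolding cluster_metric_agent_alternative T_def
    by (cases "i \<in> A"; cases "X \<in> S"; cases "Y \<in> S") simp_all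
  moreover have "pseudometric_on P (cluster_metric A S)" for P
    unfolding pseudometric_on_def cluster_metric_def by auto
  ultimately show ?thesis unfolding metric_consistent_def using fe by blast
qed

lemma SC_cluster_metric:
  assumes "A \<subseteq> {..<length \<sigma>}"
  shows "SC \<sigma> (cluster_metric A S) X = (if X \<in> S then real (card A) else real (length \<sigma> - card A))"
proof -
  have "card ({..<length \<sigma>} \<inter> A) = card A" "card ({..<length \<sigma>} \<inter> - A) = length \<sigma> - card A"
    using assms by (simp_all add: Int_absorb1 Diff_eq[symmetric] card_Diff_subset finite_subset)
  then show ?thesis
    unfolding SC_def cluster_metric_agent_alternative by (simp add: sum.If_cases Compl_eq)
qed

lemma metric_ratio_le_distortion:
  "top_profile m t \<sigma> \<Longrightarrow> metric_consistent m \<sigma> d \<Longrightarrow> metric_ratio m f \<sigma> d \<le> metric_distortion m t f"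
  unfolding metric_distortion_def by (rule SUP_upper2[where i="(\<sigma>, d)"]) auto

lemma util_ratio_le_distortion:
  "top_profile m t \<sigma> \<Longrightarrow> utility_consistent m \<sigma> u \<Longrightarrow> util_ratio m f \<sigma> u \<le> util_distortion m t f"
  unfolding util_distortion_def by (rule SUP_upper2[where i="(\<sigma>, u)"]) auto

lemma expected_cost_le_opt:
  assumes rule: "is_rule m t f" and md: "metric_distortion m t f \<le> ereal C"
    and tp: "top_profile m t \<sigma>" and mc: "metric_consistent m \<sigma> d" and m: "0 < m"
  shows "0 \<le> C \<and> (\<Sum>X<m. f \<sigma> X * SC \<sigma> d X) \<le> C * (MIN X\<in>{..<m}. SC \<sigma> d X)"
proof -
  define E where "E = (\<Sum>X<m. f \<sigma> X * SC \<sigma> d X)"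
  define opt where "opt = (MIN X\<in>{..<m}. SC \<sigma> d X)"
  have "d (Inl i) (Inr X) \<ge> 0" if "i < length \<sigma>" "X < m" for i X
    using mc that unfolding metric_consistent_def pseudometric_on_def by blast
  then have SC_nonneg: "SC \<sigma> d X \<ge> 0" if "X < m" for X
    using that unfolding SC_def by (intro sum_nonneg) simp
  have "E \<ge> 0"
    using rule tp SC_nonneg unfolding E_def is_rule_def by (intro sum_nonneg) simp
  have "opt \<ge> 0"
    using m SC_nonneg unfolding opt_def by (subst Min_ge_iff) auto
  have ratio: "metric_ratio m f \<sigma> d \<le> ereal C"
    using metric_ratio_le_distortion[OF tp mc] md by (rule order_trans)
  show ?thesis
  proof (cases "opt > 0")
    case True
    then have "E / opt \<le> C"
      using ratio unfolding metric_ratio_def Let_def E_def[symmetric] opt_def[symmetric] by simp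
    moreover have "0 \<le> E / opt" using True \<open>E \<ge> 0\<close> by simp
    ultimately have "0 \<le> C" "E \<le> C * opt" using True by (linarith, simp add: pos_divide_le_eq)
    then show ?thesis unfolding E_def[symmetric] opt_def[symmetric] by simp
  next
    case False
    then have "opt = 0" using \<open>opt \<ge> 0\<close> by simp
    moreover from this have "E = 0" and "1 \<le> C"
      using ratio unfolding metric_ratio_def Let_def E_def[symmetric] opt_def[symmetric]
      by (auto split: if_splits simp: one_ereal_def)
    ultimately show ?thesis unfolding E_def[symmetric] opt_def[symmetric] by simp
  qed
qed

text \<open>Alternatives in S cost only the agents of A, those outside S cost all other agents.\<close>

lemma rule_mass_outside_cluster:
  assumes rule: "is_rule m t f" and md: "metric_distortion m t f \<le> ereal C"
    and tp: "top_profile m t \<sigma>" and A: "A \<subseteq> {..<length \<sigma>}"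
    and in_S: "\<And>i. i < length \<sigma> \<Longrightarrow> i \<notin> A \<Longrightarrow> set (\<sigma>!i) \<subseteq> S"
    and out_S: "\<And>i. i < length \<sigma> \<Longrightarrow> i \<in> A \<Longrightarrow> set (\<sigma>!i) \<subseteq> - S"
    and Z: "Z \<in> S" "Z < m"
  shows "real (length \<sigma> - card A) * (\<Sum>X\<in>{..<m} - S. f \<sigma> X) \<le> C * real (card A)"
proof -
  let ?d = "cluster_metric A S"
  have SC: "SC \<sigma> ?d X = (if X \<in> S then real (card A) else real (length \<sigma> - card A))" for X
    using SC_cluster_metric[OF A] .
  have f_nonneg: "X < m \<Longrightarrow> f \<sigma> X \<ge> 0" for X
    using rule tp unfolding is_rule_def by blast
  from expected_cost_le_opt[OF rule md tp metric_consistent_cluster_metric[OF tp in_S out_S]] Z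
  have "0 \<le> C" and E: "(\<Sum>X<m. f \<sigma> X * SC \<sigma> ?d X) \<le> C * (MIN X\<in>{..<m}. SC \<sigma> ?d X)"
    by auto
  have "real (length \<sigma> - card A) * (\<Sum>X\<in>{..<m} - S. f \<sigma> X) = (\<Sum>X\<in>{..<m} - S. f \<sigma> X * SC \<sigma> ?d X)"
    by (simp add: sum_distrib_left SC mult.commute)
  also have "\<dots> \<le> (\<Sum>X<m. f \<sigma> X * SC \<sigma> ?d X)"
    by (rule sum_mono2) (auto simp: SC f_nonneg)
  also have "\<dots> \<le> C * SC \<sigma> ?d Z"
  proof -
    have "(MIN X\<in>{..<m}. SC \<sigma> ?d X) \<le> SC \<sigma> ?d Z" using Z by (intro Min_le) auto
    then show ?thesis using E \<open>0 \<le> C\<close> by (meson mult_left_mono order_trans)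
  qed
  finally show ?thesis using Z by (simp add: SC)
qed

lemma rule_supported_on_tops:
  assumes rule: "is_rule m t f" and md: "metric_distortion m t f \<le> ereal C"
    and tp: "top_profile m t \<sigma>" and in_S: "\<And>i. i < length \<sigma> \<Longrightarrow> set (\<sigma>!i) \<subseteq> S"
    and Z: "Z \<in> S" "Z < m"
    and X: "X < m" "X \<notin> S"
  shows "f \<sigma> X = 0"
proof -
  have "real (length \<sigma>) * (\<Sum>X\<in>{..<m} - S. f \<sigma> X) \<le> 0"
    using rule_mass_outside_cluster[OF rule md tp, of "{}"] in_S Z by simp
  moreover have "length \<sigma> > 0" using tp unfolding top_profile_def by simp
  ultimately have "(\<Sum>X\<in>{..<m} - S. f \<sigma> X) \<le> 0" by (simp add: mult_le_0_iff)
  moreover have "\<forall>X\<in>{..<m} - S. f \<sigma> X \<ge> 0" using rule tp unfolding is_rule_def by blast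
  ultimately have "\<forall>X\<in>{..<m} - S. f \<sigma> X = 0"
    by (metis antisym finite_Diff finite_lessThan sum_nonneg sum_nonneg_eq_0_iff)
  then show ?thesis using X by simp
qed

lemma util_distortion_ge:
  assumes tp: "top_profile m t \<sigma>" and uc: "utility_consistent m \<sigma> u"
    and E: "(\<Sum>X<m. f \<sigma> X * SW \<sigma> u X) \<le> e" and x: "x * e \<le> SW \<sigma> u Y" "0 \<le> x" and Y: "Y < m"
  shows "ereal x \<le> util_distortion m t f"
proof -
  define E' where "E' = (\<Sum>X<m. f \<sigma> X * SW \<sigma> u X)"
  define opt where "opt = (MAX X\<in>{..<m}. SW \<sigma> u X)"
  have "SW \<sigma> u Y \<le> opt" unfolding opt_def using Y by (intro Max_ge) auto
  have "ereal x \<le> util_ratio m f \<sigma> u"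
  proof (cases "E' > 0")
    case True
    have "x * E' \<le> opt"
      using mult_left_mono[OF E[folded E'_def] x(2)] x(1) \<open>SW \<sigma> u Y \<le> opt\<close> by linarith
    then show ?thesis
      using True unfolding util_ratio_def Let_def E'_def[symmetric] opt_def[symmetric]
      by (simp add: pos_le_divide_eq)
  qed (simp add: util_ratio_def Let_def E'_def[symmetric])
  also have "\<dots> \<le> util_distortion m t f" by (rule util_ratio_le_distortion[OF tp uc])
  finally show ?thesis .
qed

section \<open>The bound of order \<open>\<surd>m\<close>\<close>

lemma floor_sqrt_bounds:
  assumes m: "1 \<le> m" and k: "k = nat \<lfloor>sqrt (real m)\<rfloor>"
  shows "1 \<le> k \<and> k \<le> m \<and> 1 / real k + real k / real m \<le> 3 / sqrt (real m)"
proof -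
  define s where "s = sqrt (real m)"
  have s1: "s \<ge> 1" and ss: "s * s = real m" using m unfolding s_def by simp_all
  have kf: "real k = of_int \<lfloor>s\<rfloor>" using k s1 unfolding s_def by simp
  have k_le: "real k \<le> s" and k_gt: "real k > s - 1" and k1: "real k \<ge> 1"
    using kf s1 by (linarith, linarith, simp)
  have "s \<le> real m" using mult_left_mono[OF s1, of s] s1 ss by simp
  have "1 / real k \<le> 2 / s" using k_gt k1 s1 by (simp add: field_simps, linarith)
  moreover have "real k / real m \<le> 1 / s"
    using k_le s1 unfolding ss[symmetric] by (simp add: field_simps)
  ultimately show ?thesis using k1 k_le \<open>s \<le> real m\<close> unfolding s_def[symmetric] by simp
qed

lemma exists_le_inverse:
  assumes "1 \<le> k" "k \<le> m" "\<forall>X<m. g X \<ge> (0::real)" "(\<Sum>X<m. g X) = 1"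
  shows "\<exists>Y<k. g Y \<le> 1 / real k"
proof (rule ccontr)
  assume "\<not> ?thesis"
  then have "(\<Sum>Y<k. 1 / real k) < (\<Sum>Y<k. g Y)"
    using assms(1) by (intro sum_strict_mono) (auto simp: not_le lessThan_empty_iff)
  also have "\<dots> \<le> (\<Sum>X<m. g X)" using assms(2,3) by (intro sum_mono2) auto
  finally show False using assms(1,4) by simp
qed

definition leader_ranking :: "nat \<Rightarrow> nat \<Rightarrow> nat list" where
  "leader_ranking m j = j # removeAll j [0..<m]"

lemma leader_ranking:
  assumes "j < m"
  shows "distinct (leader_ranking m j) \<and> set (leader_ranking m j) = {..<m} \<and> length (leader_ranking m j) = m"
proof -
  have "distinct (leader_ranking m j)" "set (leader_ranking m j) = {..<m}"
    using assms by (auto simp: leader_ranking_def distinct_removeAll)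
  then show ?thesis by (metis card_lessThan distinct_card)
qed

lemma prefers_over_leader: "prefers (leader_ranking m j) X j \<Longrightarrow> X = j"
  using prefers_append[of "[j]" "removeAll j [0..<m]" X j] by (simp add: leader_ranking_def)

lemma leader_profile:
  assumes "1 \<le> k" "k \<le> m" "t \<le> m"
  defines "\<sigma> \<equiv> map (\<lambda>j. take t (leader_ranking m j)) [0..<k]"
  shows "top_profile m t \<sigma>" "full_extension m \<sigma> (map (leader_ranking m) [0..<k])"
proof -
  have "j < k \<Longrightarrow> distinct (leader_ranking m j) \<and> set (leader_ranking m j) = {..<m} \<and>
      length (leader_ranking m j) = m" for j
    using leader_ranking assms(2) by simp
  then show "top_profile m t \<sigma>" "full_extension m \<sigma> (map (leader_ranking m) [0..<k])"
    using assms(1,3) set_take_subset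
    by (fastforce simp: \<sigma>_def top_profile_def full_extension_def)+
qed

lemma expectation_le_point_mass_plus:
  fixes g h :: "nat \<Rightarrow> real"
  assumes "\<forall>X<m. 0 \<le> g X" "(\<Sum>X<m. g X) = 1" "Y < m"
    and "\<And>X. h X \<le> (if X = Y then 1 else 0) + c"
  shows "(\<Sum>X<m. g X * h X) \<le> g Y + c"
proof -
  have "(\<Sum>X<m. g X * h X) \<le> (\<Sum>X<m. g X * ((if X = Y then 1 else 0) + c))"
    using assms(1,4) by (intro sum_mono mult_left_mono) auto
  also have "\<dots> = (\<Sum>X<m. (if X = Y then g X else 0) + c * g X)"
    by (intro sum.cong) (simp_all add: algebra_simps)
  also have "\<dots> = g Y + c"
    using assms(2,3) by (simp add: sum.distrib flip: sum_distrib_left)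
  finally show ?thesis .
qed

lemma util_distortion_ge_sqrt:
  assumes rule: "is_rule m t f" and t: "t \<le> m" and m: "1 \<le> m"
  shows "ereal (sqrt (real m) / 4) \<le> util_distortion m t f"
proof -
  define k where "k = nat \<lfloor>sqrt (real m)\<rfloor>"
  from floor_sqrt_bounds[OF m k_def] have k: "1 \<le> k" "k \<le> m"
    and k_bound: "1 / real k + real k / real m \<le> 3 / sqrt (real m)" by auto
  define \<sigma> where "\<sigma> = map (\<lambda>j. take t (leader_ranking m j)) [0..<k]"
  note tp = leader_profile(1)[OF k t, folded \<sigma>_def]
  have "\<forall>X<m. f \<sigma> X \<ge> 0" and f_sum: "(\<Sum>X<m. f \<sigma> X) = 1"
    using rule tp unfolding is_rule_def by blast+
  then obtain Y where Y: "Y < k" "f \<sigma> Y \<le> 1 / real k" using exists_le_inverse[OF k] by blast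
  define T where "T i = (if i = Y then {Y} else {..<m})" for i
  let ?u = "\<lambda>i. uniform_on (T i)"
  have len: "length \<sigma> = k" by (simp add: \<sigma>_def)
  have "X \<in> T i" if "i < k" "prefers (leader_ranking m i) X Z" "Z \<in> T i" for i X Z
    using that prefers_over_leader prefers_mem leader_ranking[of i m] k
    by (auto simp: T_def split: if_splits)
  then have uc: "utility_consistent m \<sigma> ?u"
    using Y k m by (intro utility_consistent_uniform_on[OF leader_profile(2)[OF k t, folded \<sigma>_def]])
      (auto simp: T_def len lessThan_empty_iff)
  have SW_le: "SW \<sigma> ?u X \<le> (if X = Y then 1 else 0) + real k / real m" for X
  proof -
    have "SW \<sigma> ?u X \<le> (\<Sum>i<k. (if i = Y then (if X = Y then 1 else 0) else 0) + 1 / real m)"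
      unfolding SW_def len by (intro sum_mono) (auto simp: T_def uniform_on_def)
    also have "\<dots> = (if X = Y then 1 else 0) + real k / real m"
      using Y by (simp add: sum.distrib)
    finally show ?thesis .
  qed
  have "(\<Sum>X<m. f \<sigma> X * SW \<sigma> ?u X) \<le> f \<sigma> Y + real k / real m"
    using Y k by (intro expectation_le_point_mass_plus[OF \<open>\<forall>X<m. f \<sigma> X \<ge> 0\<close> f_sum _ SW_le]) simp
  also have "\<dots> \<le> 3 / sqrt (real m)" using Y k_bound by linarith
  finally have E: "(\<Sum>X<m. f \<sigma> X * SW \<sigma> ?u X) \<le> 3 / sqrt (real m)" .
  have "1 \<le> SW \<sigma> ?u Y"
    unfolding SW_def len using Y
    by (subst sum.remove[of _ Y]) (auto simp: T_def uniform_on_def intro!: sum_nonneg)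
  moreover have "sqrt (real m) / 4 * (3 / sqrt (real m)) \<le> 1" using m by simp
  ultimately show ?thesis
    using Y k by (intro util_distortion_ge[where f = f and Y = Y, OF tp uc E]) auto
qed

lemma div_eq_iff_bounds:
  fixes X t b :: nat
  assumes "0 < t"
  shows "X div t = b \<longleftrightarrow> b * t \<le> X \<and> X < b * t + t"
proof
  show "X div t = b \<Longrightarrow> b * t \<le> X \<and> X < b * t + t"
    using dividend_less_div_times[OF assms, of X] by auto
  show "b * t \<le> X \<and> X < b * t + t \<Longrightarrow> X div t = b"
    by (intro div_nat_eqI) (simp_all add: mult.commute)
qed

section \<open>The bound of order \<open>(m/t)\<^sup>3\<^sup>/\<^sup>2\<close>\<close>

text \<open>Block b consists of the alternatives bt, ..., bt + t - 1. Agent i < q (minority) reports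
  block i; the G agents q + jG, ..., q + jG + G - 1 (majority) report block q + j. Alternative 2qt is
  approved by every minority agent but reported by nobody.\<close>

locale two_tier =
  fixes m t q G :: nat
  assumes t_pos: "0 < t" and G_pos: "0 < G" and q_pos: "0 < q" and room: "2 * q * t < m"
begin

definition agents :: nat where
  "agents = q + G * q"

definition block :: "nat \<Rightarrow> nat" where
  "block i = (if i < q then i else q + (i - q) div G)"

definition profile :: "nat list list" where
  "profile = map (\<lambda>i. [block i * t..<block i * t + t]) [0..<agents]"

definition approved :: "nat \<Rightarrow> nat set" where
  "approved i = {block i * t..<block i * t + t} \<union> (if i < q then {2 * q * t} else {2 * q * t..<m})"

abbreviation util :: "nat \<Rightarrow> nat \<Rightarrow> real" where
  "util \<equiv> \<lambda>i. uniform_on (approved i)"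

lemma block_less: "i < agents \<Longrightarrow> block i < 2 * q"
  using less_mult_imp_div_less[of "i - q" q G] by (auto simp: block_def agents_def mult.commute)

lemma block_less_q_iff: "block i < q \<longleftrightarrow> i < q"
  by (simp add: block_def)

lemma block_end_le: "i < agents \<Longrightarrow> block i * t + t \<le> 2 * q * t"
proof -
  assume "i < agents"
  then have "Suc (block i) * t \<le> 2 * q * t" using block_less[of i] by (intro mult_le_mono1) simp
  then show ?thesis by simp
qed

lemma mem_block_iff: "X \<in> {b * t..<b * t + t} \<longleftrightarrow> X div t = b"
  using div_eq_iff_bounds[OF t_pos] by simp

lemma length_profile [simp]: "length profile = agents"
  by (simp add: profile_def)

lemma profile_nth: "i < agents \<Longrightarrow> profile ! i = [block i * t..<block i * t + t]"
  by (simp add: profile_def)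

lemma top_profile: "top_profile m t profile"
  unfolding top_profile_def
proof
  show "profile \<noteq> []" using q_pos by (simp add: profile_def agents_def)
  show "\<forall>s\<in>set profile. length s = t \<and> distinct s \<and> set s \<subseteq> {..<m}"
    using block_end_le room by (fastforce simp: in_set_conv_nth profile_nth)
qed

lemma profile_tops_below: "i < agents \<Longrightarrow> set (profile ! i) \<subseteq> {..<2 * q * t}"
  using block_end_le by (fastforce simp: profile_nth)

lemma profile_tops_minority: "i < q \<Longrightarrow> set (profile ! i) \<subseteq> - {q * t..<2 * q * t}"
proof -
  assume "i < q"
  then have "Suc i * t \<le> q * t" by (intro mult_le_mono1) simp
  with \<open>i < q\<close> show ?thesis by (auto simp: profile_nth agents_def block_def)
qed

lemma profile_tops_majority:
  "i < agents \<Longrightarrow> \<not> i < q \<Longrightarrow> set (profile ! i) \<subseteq> {q * t..<2 * q * t}"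
proof -
  assume "i < agents" "\<not> i < q"
  then have "q * t \<le> block i * t" "block i * t + t \<le> 2 * q * t"
    using block_end_le[of i] by (simp_all add: block_def)
  with \<open>i < agents\<close> show ?thesis by (auto simp: profile_nth)
qed

lemma approved_subset: "i < agents \<Longrightarrow> approved i \<subseteq> {..<m}"
  using block_end_le[of i] room by (auto simp: approved_def)

lemma card_approved: "i < agents \<Longrightarrow> card (approved i) = (if i < q then t + 1 else t + (m - 2 * q * t))"
proof -
  assume "i < agents"
  then have "block i * t + t \<le> 2 * q * t" by (rule block_end_le)
  then have "{block i * t..<block i * t + t} \<inter> (if i < q then {2 * q * t} else {2 * q * t..<m}) = {}"
    by auto
  then show ?thesis unfolding approved_def by (simp add: card_Un_disjoint)
qed

lemma utility_consistent: "utility_consistent m profile util"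
proof -
  have "set (profile ! i) \<subseteq> approved i" if "i < agents" for i
    using that by (auto simp: profile_nth approved_def)
  then obtain \<tau> where "full_extension m profile \<tau>"
    "\<And>i X Y. i < agents \<Longrightarrow> prefers (\<tau>!i) X Y \<Longrightarrow> Y \<in> approved i \<Longrightarrow> X \<in> approved i"
    using top_profile_extension_respecting[OF top_profile, of approved] unfolding length_profile
    by blast
  moreover have "approved i \<noteq> {}" for i using t_pos by (auto simp: approved_def)
  ultimately show ?thesis using approved_subset by (intro utility_consistent_uniform_on) auto
qed

lemma welfare_at_top_of_minority: "real q / (real t + 1) \<le> SW profile util (2 * q * t)"
proof -
  have "(\<Sum>i<q. util i (2 * q * t)) = (\<Sum>i<q. 1 / (real t + 1))"
    by (intro sum.cong) (auto simp: uniform_on_def card_approved agents_def, auto simp: approved_def)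
  also have "\<dots> = real q / (real t + 1)" by simp
  finally have "(\<Sum>i<q. util i (2 * q * t)) = real q / (real t + 1)" .
  moreover have "(\<Sum>i<q. util i (2 * q * t)) \<le> (\<Sum>i<agents. util i (2 * q * t))"
    by (intro sum_mono2) (auto simp: agents_def uniform_on_def)
  ultimately show ?thesis unfolding SW_def by simp
qed

lemma welfare_below:
  assumes "X < 2 * q * t"
  shows "SW profile util X = (\<Sum>i\<in>{i\<in>{..<agents}. block i = X div t}. 1 / real (card (approved i)))"
proof -
  have "util i X = (if block i = X div t then 1 / real (card (approved i)) else 0)" for i
    using assms mem_block_iff[of X "block i"] by (auto simp: uniform_on_def approved_def)
  then have "SW profile util X = (\<Sum>i<agents. if block i = X div t then 1 / real (card (approved i)) else 0)"
    unfolding SW_def by simp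
  also have "\<dots> = (\<Sum>i\<in>{i\<in>{..<agents}. block i = X div t}. 1 / real (card (approved i)))"
    by (rule sum.inter_filter[symmetric]) simp
  finally show ?thesis .
qed

lemma welfare_minority:
  assumes "X < q * t"
  shows "SW profile util X \<le> 1 / (real t + 1)"
proof -
  have "X div t < q" using assms t_pos by (simp add: div_less_iff_less_mult)
  then have "{i\<in>{..<agents}. block i = X div t} = {X div t}"
    by (auto simp: agents_def block_def split: if_splits)
  moreover have "X < 2 * q * t" using assms by simp
  ultimately show ?thesis
    using welfare_below \<open>X div t < q\<close> by (simp add: card_approved agents_def algebra_simps)
qed

lemma welfare_majority:
  assumes "q * t \<le> X" "X < 2 * q * t"
  shows "SW profile util X \<le> real G / (real t + real (m - 2 * q * t))"
proof -
  define b where "b = X div t"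
  define I where "I = {i\<in>{..<agents}. block i = b}"
  have "q \<le> b" using assms t_pos unfolding b_def by (simp add: less_eq_div_iff_mult_less_eq)
  have "I \<subseteq> {q + (b - q) * G..<q + (b - q) * G + G}"
  proof
    fix i assume "i \<in> I"
    then have "\<not> i < q" "(i - q) div G = b - q"
      using \<open>q \<le> b\<close> block_less_q_iff[of i] by (auto simp: I_def block_def)
    then show "i \<in> {q + (b - q) * G..<q + (b - q) * G + G}"
      using div_eq_iff_bounds[OF G_pos] by auto
  qed
  then have "card I \<le> card {q + (b - q) * G..<q + (b - q) * G + G}"
    by (intro card_mono) simp_all
  then have "card I \<le> G" by simp
  have "real (card (approved i)) = real t + real (m - 2 * q * t)" if "i \<in> I" for i
    using that \<open>q \<le> b\<close> block_less_q_iff[of i] card_approved[of i] by (auto simp: I_def)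
  then have "SW profile util X = (\<Sum>i\<in>I. 1 / (real t + real (m - 2 * q * t)))"
    unfolding welfare_below[OF assms(2)] I_def[symmetric] b_def[symmetric] by simp
  also have "\<dots> \<le> real G / (real t + real (m - 2 * q * t))"
    using \<open>card I \<le> G\<close> by (simp add: divide_right_mono)
  finally show ?thesis .
qed

lemma expected_welfare_le:
  assumes nonneg: "\<forall>X<m. 0 \<le> g X" and sum1: "(\<Sum>X<m. g X) = 1"
    and support: "\<And>X. X < m \<Longrightarrow> 2 * q * t \<le> X \<Longrightarrow> g X = 0"
  shows "(\<Sum>X<m. g X * SW profile util X)
    \<le> (\<Sum>X\<in>{..<m} - {q * t..<2 * q * t}. g X) / (real t + 1) + real G / (real t + real (m - 2 * q * t))"
proof -
  define S where "S = {q * t..<2 * q * t}"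
  define c where "c = real G / (real t + real (m - 2 * q * t))"
  have "c \<ge> 0" by (simp add: c_def)
  have "g X * SW profile util X \<le> (if X \<in> S then 0 else g X / (real t + 1)) + c * g X"
    if "X < m" for X
  proof (cases "X < 2 * q * t")
    case True
    have "SW profile util X \<le> (if X \<in> S then 0 else 1 / (real t + 1)) + c"
      using welfare_minority[of X] welfare_majority[of X, folded c_def] True \<open>c \<ge> 0\<close>
      by (auto simp: S_def not_le)
    then show ?thesis using nonneg that by (auto dest: mult_left_mono[of _ _ "g X"] simp: algebra_simps)
  qed (use support that in simp)
  then have "(\<Sum>X<m. g X * SW profile util X)
      \<le> (\<Sum>X<m. if X \<in> S then 0 else g X / (real t + 1)) + c * (\<Sum>X<m. g X)"
    unfolding sum_distrib_left sum.distrib[symmetric] by (intro sum_mono) simp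
  also have "(\<Sum>X<m. if X \<in> S then 0 else g X / (real t + 1)) = (\<Sum>X\<in>{..<m} - S. g X) / (real t + 1)"
    by (simp add: sum.If_cases sum_divide_distrib Diff_eq)
  finally show ?thesis using sum1 by (simp add: S_def c_def)
qed

end

lemma two_tier_ratio:
  fixes t r G p q K :: real
  assumes t: "1 \<le> t" and r: "1 \<le> r" and G: "r \<le> G" "G \<le> 2 * r"
    and p: "r * r * t \<le> 3 * (t + p)" and q: "r * r \<le> 6 * q" and K: "0 \<le> K"
  shows "r ^ 3 / (6 * (12 + K)) * (K / (G * (t + 1)) + G / (t + p)) \<le> q / (t + 1)"
proof -
  define D where "D = K / (G * (t + 1)) + G / (t + p)"
  have "0 < r * r * t" using r t by simp
  then have tp: "t + p > 0" using p by (simp add: distrib_left)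
  have "K / G \<le> K / r" using G r K by (intro divide_left_mono) auto
  moreover have "G * (t + 1) / (t + p) \<le> 12 / r"
  proof -
    have "G * (t + 1) * r \<le> 2 * r * (2 * t) * r" using G r t by (intro mult_right_mono mult_mono) auto
    also have "\<dots> = 4 * (r * r * t)" by (simp add: algebra_simps)
    also have "\<dots> \<le> 12 * (t + p)" using p by simp
    finally show ?thesis using tp r by (simp add: field_simps)
  qed
  moreover have "(t + 1) * D = K / G + G * (t + 1) / (t + p)"
  proof -
    have "t + 1 \<noteq> 0" "G \<noteq> 0" using t G r by auto
    then have "(t + 1) * (K / (G * (t + 1))) = K / G" by simp
    then show ?thesis unfolding D_def distrib_left by (simp add: algebra_simps)
  qed
  ultimately have "(t + 1) * D \<le> (K + 12) / r" by (simp add: add_divide_distrib)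
  then have "D * (r * (t + 1)) \<le> K + 12" using r by (simp add: pos_le_divide_eq ac_simps)
  then have "D \<le> (K + 12) / (r * (t + 1))" using t r by (simp add: pos_le_divide_eq)
  then have "r ^ 3 / (6 * (12 + K)) * D \<le> r ^ 3 / (6 * (12 + K)) * ((K + 12) / (r * (t + 1)))"
    using K r by (intro mult_left_mono) auto
  also have "\<dots> = (r ^ 3 * (K + 12)) / (6 * (12 + K) * (r * (t + 1)))" by simp
  also have "\<dots> = r * r / (6 * (t + 1))"
  proof -
    have "6 * (12 + K) * (r * (t + 1)) \<noteq> 0" "6 * (t + 1) \<noteq> 0" using K r t by auto
    then show ?thesis by (subst frac_eq_eq) (simp_all add: power3_eq_cube algebra_simps)
  qed
  also have "\<dots> = r * r / 6 / (t + 1)" by simp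
  also have "\<dots> \<le> q / (t + 1)" using q t by (intro divide_right_mono) auto
  finally show ?thesis unfolding D_def .
qed

lemma three_halves_power_ratio:
  "real m * sqrt (real m) / (real t * sqrt (real t)) = real m / real t * sqrt (real m / real t)"
  by (simp add: real_sqrt_divide)

lemma two_tier_parameters:
  fixes m t :: nat
  assumes t: "1 \<le> t" and mt: "6 * t \<le> m"
  defines "q \<equiv> m div (3 * t)" and "r \<equiv> sqrt (real m / real t)"
  shows "0 < q" "2 * q * t < m" "r * r * real t \<le> 3 * (real t + real (m - 2 * q * t))"
    "r * r \<le> 6 * real q" "1 \<le> r" "r ^ 3 = real m * sqrt (real m) / (real t * sqrt (real t))"
proof -
  show "0 < q" using mt t unfolding q_def by (simp add: div_greater_zero_iff)
  have "q * (3 * t) \<le> m" unfolding q_def by simp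
  moreover have "1 \<le> q * t" using \<open>0 < q\<close> t by simp
  ultimately show "2 * q * t < m" by linarith
  have rr: "r * r = real m / real t" unfolding r_def by simp
  moreover have "3 * (real q * real t) \<le> real m"
    using \<open>q * (3 * t) \<le> m\<close> of_nat_le_iff[of "q * (3 * t)" m, where 'a = real] by simp
  ultimately show "r * r * real t \<le> 3 * (real t + real (m - 2 * q * t))"
    using t \<open>2 * q * t < m\<close> by (simp add: of_nat_diff)
  have "m < 3 * t + q * (3 * t)" unfolding q_def using t by (intro dividend_less_div_times) simp
  then have "real m < real (3 * t + q * (3 * t))" by (simp only: of_nat_less_iff)
  then have "real m < (3 * real q + 3) * real t" by (simp add: algebra_simps)
  moreover have "(3 * real q + 3) * real t \<le> 6 * real q * real t"
    using \<open>0 < q\<close> by (intro mult_right_mono) auto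
  ultimately have "real m \<le> 6 * real q * real t" by linarith
  then show "r * r \<le> 6 * real q" using t unfolding rr by (simp add: pos_divide_le_eq)
  show "1 \<le> r" using t mt unfolding r_def by (simp add: le_divide_eq)
  show "r ^ 3 = real m * sqrt (real m) / (real t * sqrt (real t))"
    unfolding three_halves_power_ratio rr[symmetric] using \<open>1 \<le> r\<close> by (simp add: power3_eq_cube)
qed

lemma nat_ceiling_le_twice:
  assumes "1 \<le> r"
  shows "r \<le> real (nat \<lceil>r\<rceil>) \<and> real (nat \<lceil>r\<rceil>) \<le> 2 * r"
  using assms ceiling_correct[of r] by (simp add: of_nat_nat)

lemma util_distortion_ge_two_tier:
  assumes rule: "is_rule m t f" and md: "metric_distortion m t f \<le> ereal C"
    and t: "1 \<le> t" and mt: "6 * t \<le> m"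
  shows "ereal (real m * sqrt (real m) / (real t * sqrt (real t)) / (6 * (12 + \<bar>C\<bar>)))
    \<le> util_distortion m t f"
proof -
  define q where "q = m div (3 * t)"
  define r where "r = sqrt (real m / real t)"
  define G where "G = nat \<lceil>r\<rceil>"
  note params = two_tier_parameters[OF t mt, folded q_def r_def]
  have G: "r \<le> real G" "real G \<le> 2 * r"
    unfolding G_def using nat_ceiling_le_twice[OF params(5)] by blast+
  interpret two_tier m t q G
    using t params(1,2,5) G by unfold_locales auto
  define S where "S = {q * t..<2 * q * t}"
  define F where "F = (\<Sum>X\<in>{..<m} - S. f profile X)"
  have f: "\<forall>X<m. 0 \<le> f profile X" "(\<Sum>X<m. f profile X) = 1"
    using rule top_profile unfolding is_rule_def by blast+
  have "f profile X = 0" if "X < m" "2 * q * t \<le> X" for X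
    using rule_supported_on_tops[OF rule md top_profile, of "{..<2 * q * t}" 0] that
      profile_tops_below params(1,2) t by auto
  with f have E: "(\<Sum>X<m. f profile X * SW profile util X)
      \<le> F / (real t + 1) + real G / (real t + real (m - 2 * q * t))"
    unfolding F_def S_def by (intro expected_welfare_le) auto
  have "real (agents - card {..<q}) * F \<le> C * real (card {..<q})"
    unfolding F_def S_def
    using profile_tops_majority profile_tops_minority params(1,2) t
    by (intro rule_mass_outside_cluster[where Z = "q * t", OF rule md top_profile, unfolded length_profile])
      (auto simp: agents_def)
  then have "real q * (real G * F) \<le> real q * C" by (simp add: agents_def algebra_simps)
  also have "\<dots> \<le> real q * \<bar>C\<bar>" by (simp add: mult_left_mono)
  finally have "real q * (real G * F) \<le> real q * \<bar>C\<bar>" .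
  then have "F \<le> \<bar>C\<bar> / real G"
    using params(1,5) G by (simp add: pos_le_divide_eq mult.commute)
  then have "F / (real t + 1) \<le> \<bar>C\<bar> / (real G * (real t + 1))"
    using divide_right_mono[of F "\<bar>C\<bar> / real G" "real t + 1"] by simp
  with E have E': "(\<Sum>X<m. f profile X * SW profile util X)
      \<le> \<bar>C\<bar> / (real G * (real t + 1)) + real G / (real t + real (m - 2 * q * t))"
    by linarith
  have "r ^ 3 / (6 * (12 + \<bar>C\<bar>)) * (\<bar>C\<bar> / (real G * (real t + 1)) + real G / (real t + real (m - 2 * q * t)))
      \<le> SW profile util (2 * q * t)"
    using two_tier_ratio[OF _ params(5) G params(3,4), of "\<bar>C\<bar>"] welfare_at_top_of_minority t
    by (auto intro: order_trans)
  then show ?thesis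
    unfolding params(6)[symmetric] using params(2,5)
    by (intro util_distortion_ge[where f = f, OF top_profile utility_consistent E']) auto
qed

lemma mult_sqrt_le_eighteen: "0 \<le> x \<Longrightarrow> x \<le> 6 \<Longrightarrow> x * sqrt x \<le> (18::real)"
proof -
  assume x: "0 \<le> x" "x \<le> 6"
  then have "sqrt x \<le> 3" by (intro real_le_lsqrt) simp_all
  then show ?thesis using x mult_mono[of x 6 "sqrt x" 3] by simp
qed

lemma util_distortion_ge_three_halves:
  assumes rule: "is_rule m t f" and md: "metric_distortion m t f \<le> ereal C"
    and t: "1 \<le> t" "t \<le> m"
  shows "ereal (real m * sqrt (real m) / (real t * sqrt (real t)) / (60 * (12 + \<bar>C\<bar>)))
    \<le> util_distortion m t f"
proof -
  define a where "a = real m * sqrt (real m) / (real t * sqrt (real t))"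
  have "0 \<le> a" by (simp add: a_def)
  show ?thesis
  proof (cases "6 * t \<le> m")
    case True
    have "ereal (a / (60 * (12 + \<bar>C\<bar>))) \<le> ereal (a / (6 * (12 + \<bar>C\<bar>)))"
      using \<open>0 \<le> a\<close> by (simp add: divide_left_mono)
    also have "\<dots> \<le> util_distortion m t f"
      using util_distortion_ge_two_tier[OF rule md t(1) True, folded a_def] .
    finally show ?thesis unfolding a_def .
  next
    case False
    then have "real m / real t \<le> 6" using t by (simp add: pos_divide_le_eq)
    then have "a \<le> 18" unfolding a_def three_halves_power_ratio by (intro mult_sqrt_le_eighteen) simp_all
    moreover have "a / (60 * (12 + \<bar>C\<bar>)) \<le> a / 720" using \<open>0 \<le> a\<close> by (intro divide_left_mono) auto
    moreover have "1 \<le> sqrt (real m)" using t by simp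
    ultimately have "ereal (a / (60 * (12 + \<bar>C\<bar>))) \<le> ereal (sqrt (real m) / 4)"
      by (simp only: ereal_less_eq(3))
    also have "\<dots> \<le> util_distortion m t f" using util_distortion_ge_sqrt[OF rule t(2)] t by simp
    finally show ?thesis unfolding a_def .
  qed
qed

theorem mainTheorem11:
  shows "\<forall>C::real. \<exists>c::real. c > 0 \<and>
    (\<forall>(m::nat) (t::nat) f. 1 \<le> t \<and> t \<le> m \<and> is_rule m t f \<and> metric_distortion m t f \<le> ereal C \<longrightarrow>
       ereal (c * max (real m * sqrt (real m) / (real t * sqrt (real t))) (sqrt (real m)))
         \<le> util_distortion m t f)"
proof
  fix C :: real
  define c where "c = 1 / (60 * (12 + \<bar>C\<bar>))"
  have "0 < c" by (simp add: c_def add_pos_nonneg)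
  moreover have "ereal (c * max (real m * sqrt (real m) / (real t * sqrt (real t))) (sqrt (real m)))
      \<le> util_distortion m t f"
    if t: "1 \<le> t" "t \<le> m" and rule: "is_rule m t f" and md: "metric_distortion m t f \<le> ereal C"
    for m t f
  proof -
    have "ereal (c * sqrt (real m)) \<le> ereal (sqrt (real m) / 4)" by (simp add: c_def field_simps)
    also have "\<dots> \<le> util_distortion m t f" using util_distortion_ge_sqrt[OF rule t(2)] t by simp
    finally show ?thesis
      using util_distortion_ge_three_halves[OF rule md t] \<open>0 < c\<close> by (simp add: max_def c_def)
  qed
  ultimately show "\<exists>c>0. \<forall>m t f. 1 \<le> t \<and> t \<le> m \<and> is_rule m t f \<and> metric_distortion m t f \<le> ereal C \<longrightarrow>
      ereal (c * max (real m * sqrt (real m) / (real t * sqrt (real t))) (sqrt (real m)))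
        \<le> util_distortion m t f"
    by blast
qed

end
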